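(* Let $n\ge1$ and suppose $N_c\ge 2n$ and $N_f\ge 2n$. With the mesonic polynomials $\mathcal O_\alpha$ ($\alpha\in S_{2n}$) defined below, $$\dim_{\mathbb C}\operatorname{span}\{\mathcal O_\alpha:\alpha\in S_{2n}\}=\frac1{|H|}\sum_{\gamma\in H}\sum_{\alpha\in S_{2n}}\delta(\gamma\alpha\gamma^{-1}\alpha^{-1})=\frac1{|H|}\sum_{\sigma\in S_{2n}}\sum_{\gamma\in S_{2n}}\delta(\gamma\sigma\gamma^{-1}\sigma^{-1})\,\delta(\Sigma_0\gamma\Sigma_0\gamma^{-1}),$$ i.e. it equals the number of orbits of $S_{2n}$ under conjugation by $H$.
   Context: $\Sigma_0=(1\,2)(3\,4)\cdots(2n-1\,2n)\in S_{2n}$, $H=S_n[S_2]=\{\gamma\in S_{2n}:\gamma\Sigma_0\gamma^{-1}=\Sigma_0\}$ (order $2^nn!$), and $\delta(g)=1$ if $g$ is the identity and $0$ otherwise. For $a=1,\dots,N_f$, $\Phi_a$ is an $N_c\times N_c$ matrix of commuting indeterminates (distinct for distinct $(a,i,j)$), and for $\alpha\in S_{2n}$, $\mathcal O_\alpha=\sum_{a_1,\dots,a_n=1}^{N_f}\sum_{i_1,\dots,i_{2n}=1}^{N_c}\prod_{k=1}^{2n}(\Phi_{c_k})_{i_k\,i_{\alpha(k)}}$ with $c_{2m-1}=c_{2m}=a_m$. *)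

theory Defs
  imports "HOL-Library.Poly_Mapping" "HOL-Combinatorics.Permutations" Complex_Main
begin

text \<open>Variables of the polynomial ring: triples (a,i,j) standing for the entry (Phi_a)_{ij},
  with 0-based indices a < N_f, i,j < N_c.\<close>
type_synonym var = "nat \<times> nat \<times> nat"
type_synonym cpoly = "(var \<Rightarrow>\<^sub>0 nat) \<Rightarrow>\<^sub>0 complex"

definition Xvar :: "var \<Rightarrow> cpoly" where
  "Xvar v = Poly_Mapping.single (Poly_Mapping.single v 1) 1"

definition cscale :: "complex \<Rightarrow> cpoly \<Rightarrow> cpoly" where
  "cscale c p = Poly_Mapping.map (\<lambda>x. c * x) p"

definition span_dim :: "cpoly set \<Rightarrow> nat" where
  "span_dim S = vector_space.dim cscale S"

text \<open>Symmetric group S_{2n} realised as permutations of {0..<2n} (0-based points).\<close>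
definition Sym :: "nat \<Rightarrow> (nat \<Rightarrow> nat) set" where
  "Sym m = {p. p permutes {0..<m}}"

text \<open>Sigma_0 = (1 2)(3 4)...(2n-1 2n), 0-based: (0 1)(2 3)...(2n-2 2n-1).\<close>
definition Sigma0 :: "nat \<Rightarrow> nat \<Rightarrow> nat" where
  "Sigma0 n k = (if k < 2*n then (if even k then k + 1 else k - 1) else k)"

definition Hgrp :: "nat \<Rightarrow> (nat \<Rightarrow> nat) set" where
  "Hgrp n = {g \<in> Sym (2*n). g \<circ> Sigma0 n \<circ> inv g = Sigma0 n}"

definition delta :: "(nat \<Rightarrow> nat) \<Rightarrow> real" where
  "delta g = (if g = id then 1 else 0)"

text \<open>Mesonic polynomial O_alpha; flavour map a : {0..<n} -> {0..<N_f}, colour map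
  i : {0..<2n} -> {0..<N_c}; c_k = a_(k div 2) (0-based version of c_{2m-1}=c_{2m}=a_m).\<close>
definition mesonic :: "nat \<Rightarrow> nat \<Rightarrow> nat \<Rightarrow> (nat \<Rightarrow> nat) \<Rightarrow> cpoly" where
  "mesonic n Nf Nc \<alpha> =
     (\<Sum>a \<in> PiE {0..<n} (\<lambda>_. {0..<Nf}).
       \<Sum>i \<in> PiE {0..<2*n} (\<lambda>_. {0..<Nc}).
         \<Prod>k<2*n. Xvar (a (k div 2), i k, i (\<alpha> k)))"

end

theory Submission
  imports Defs
begin

text \<open>Each mesonic polynomial O_alpha is a sum of monomials with coefficient one, so a monomial
  has a nonzero coefficient in O_alpha exactly when it occurs as a term. Relabelling colours by
  gamma in H and flavours by the induced permutation of the pairs {2m, 2m+1} shows that O_alpha is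
  invariant under conjugation of alpha by H. Conversely, for N_f >= n and N_c >= 2n, O_alpha
  contains the diagonal monomial prod_k (Phi_(k div 2))_(k, alpha k), and any colour assignment
  producing this monomial in O_beta, extended by the identity, is an element of H conjugating beta
  to alpha. Hence the distinct O_alpha correspond to the H-orbits, each of them has a monomial
  that the others lack, and so they are linearly independent. Burnside's lemma counts the orbits;
  in the last sum the factor delta(Sigma_0 gamma Sigma_0 gamma^-1) restricts gamma to H.\<close>

section \<open>Burnside's lemma for a permutation group acting by conjugation\<close>

locale permutation_group =
  fixes A :: "'a set" and G :: "('a \<Rightarrow> 'a) set"
  assumes finite_domain: "finite A"
    and permutes_mem: "g \<in> G \<Longrightarrow> g permutes A"
    and id_mem: "id \<in> G"
    and comp_mem: "g \<in> G \<Longrightarrow> h \<in> G \<Longrightarrow> g \<circ> h \<in> G"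
    and inv_mem: "g \<in> G \<Longrightarrow> inv g \<in> G"
begin

definition conj_orbit :: "('a \<Rightarrow> 'a) \<Rightarrow> ('a \<Rightarrow> 'a) set" where
  "conj_orbit p = {g \<circ> p \<circ> inv g | g. g \<in> G}"

definition centralizer :: "('a \<Rightarrow> 'a) \<Rightarrow> ('a \<Rightarrow> 'a) set" where
  "centralizer p = {g \<in> G. g \<circ> p \<circ> inv g = p}"

lemma finite_G: "finite G"
  using finite_permutations[OF finite_domain] by (rule finite_subset[rotated]) (auto dest: permutes_mem)

lemma inv_comp_cancel:
  assumes "g \<in> G" shows "inv g \<circ> g = id" and "g \<circ> inv g = id"
  using permutes_inv_o[OF permutes_mem[OF assms]] by auto

lemma conj_comp:
  assumes "g \<in> G" "h \<in> G"
  shows "(g \<circ> h) \<circ> p \<circ> inv (g \<circ> h) = g \<circ> (h \<circ> p \<circ> inv h) \<circ> inv g"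
proof -
  have "bij g" "bij h" using assms permutes_bij permutes_mem by blast+
  then show ?thesis by (simp add: o_inv_distrib o_assoc)
qed

lemma conj_inv:
  assumes "g \<in> G"
  shows "inv g \<circ> (g \<circ> p \<circ> inv g) \<circ> inv (inv g) = p"
proof -
  have "inv g \<circ> (g \<circ> p \<circ> inv g) \<circ> inv (inv g) = (inv g \<circ> g) \<circ> p \<circ> (inv g \<circ> g)"
    by (simp add: permutes_inv_inv[OF permutes_mem[OF assms]] o_assoc)
  then show ?thesis by (simp add: inv_comp_cancel[OF assms])
qed

lemma conj_permutes: "g \<in> G \<Longrightarrow> p permutes A \<Longrightarrow> g \<circ> p \<circ> inv g permutes A"
  by (simp add: permutes_compose permutes_inv permutes_mem)

lemma conj_orbit_subset: "p permutes A \<Longrightarrow> conj_orbit p \<subseteq> {q. q permutes A}"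
  unfolding conj_orbit_def using conj_permutes by blast

lemma conj_orbit_self: "p \<in> conj_orbit p"
  unfolding conj_orbit_def using id_mem by force

lemma finite_conj_orbit: "finite (conj_orbit p)"
proof -
  have "conj_orbit p = (\<lambda>g. g \<circ> p \<circ> inv g) ` G" unfolding conj_orbit_def by blast
  then show ?thesis using finite_G by simp
qed

lemma conj_orbit_mono:
  assumes "q \<in> conj_orbit p" shows "conj_orbit q \<subseteq> conj_orbit p"
proof
  fix r assume "r \<in> conj_orbit q"
  then obtain g where g: "g \<in> G" and r: "r = g \<circ> q \<circ> inv g" unfolding conj_orbit_def by blast
  obtain h where h: "h \<in> G" and q: "q = h \<circ> p \<circ> inv h"
    using assms unfolding conj_orbit_def by blast
  have "r = (g \<circ> h) \<circ> p \<circ> inv (g \<circ> h)" by (simp only: r q conj_comp[OF g h])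
  then show "r \<in> conj_orbit p" unfolding conj_orbit_def using comp_mem[OF g h] by blast
qed

lemma conj_orbit_eq:
  assumes q: "q \<in> conj_orbit p" shows "conj_orbit q = conj_orbit p"
proof
  show "conj_orbit q \<subseteq> conj_orbit p" using q by (rule conj_orbit_mono)
  obtain h where h: "h \<in> G" and "q = h \<circ> p \<circ> inv h" using q unfolding conj_orbit_def by blast
  then have "p = inv h \<circ> q \<circ> inv (inv h)" by (simp only: conj_inv)
  then have "p \<in> conj_orbit q" unfolding conj_orbit_def using inv_mem[OF h] by blast
  then show "conj_orbit p \<subseteq> conj_orbit q" by (rule conj_orbit_mono)
qed

lemma conj_orbit_eq_iff: "q \<in> conj_orbit p \<longleftrightarrow> conj_orbit q = conj_orbit p"
  using conj_orbit_eq conj_orbit_self by blast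

lemma conj_fibre_eq:
  assumes g0: "g0 \<in> G"
  shows "{g \<in> G. g \<circ> p \<circ> inv g = g0 \<circ> p \<circ> inv g0} = (\<circ>) g0 ` centralizer p"
proof safe
  fix g assume g: "g \<in> G" and eq: "g \<circ> p \<circ> inv g = g0 \<circ> p \<circ> inv g0"
  have "(inv g0 \<circ> g) \<circ> p \<circ> inv (inv g0 \<circ> g) = p"
    by (simp only: conj_comp[OF inv_mem[OF g0] g] eq conj_inv[OF g0])
  then have "inv g0 \<circ> g \<in> centralizer p"
    unfolding centralizer_def using comp_mem[OF inv_mem[OF g0] g] by blast
  moreover have "g = g0 \<circ> (inv g0 \<circ> g)"
    by (simp add: o_assoc inv_comp_cancel[OF g0])
  ultimately show "g \<in> (\<circ>) g0 ` centralizer p" by blast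
next
  fix c assume "c \<in> centralizer p"
  then have c: "c \<in> G" "c \<circ> p \<circ> inv c = p" unfolding centralizer_def by auto
  then show "g0 \<circ> c \<in> G" using comp_mem[OF g0] by blast
  show "(g0 \<circ> c) \<circ> p \<circ> inv (g0 \<circ> c) = g0 \<circ> p \<circ> inv g0"
    by (simp only: conj_comp[OF g0 c(1)] c(2))
qed

lemma card_conj_fibre:
  assumes g0: "g0 \<in> G"
  shows "card {g \<in> G. g \<circ> p \<circ> inv g = g0 \<circ> p \<circ> inv g0} = card (centralizer p)"
proof -
  have "inj ((\<circ>) g0)"
    by (rule inj_on_inverseI[where g = "(\<circ>) (inv g0)"]) (simp add: o_assoc inv_comp_cancel[OF g0])
  then show ?thesis unfolding conj_fibre_eq[OF g0] by (metis card_image inj_on_subset subset_UNIV)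
qed

theorem orbit_stabilizer: "card G = card (conj_orbit p) * card (centralizer p)"
proof -
  let ?c = "\<lambda>g. g \<circ> p \<circ> inv g"
  have orbit: "conj_orbit p = ?c ` G" unfolding conj_orbit_def by blast
  have "card G = (\<Sum>g\<in>G. 1)" by simp
  also have "\<dots> = (\<Sum>q\<in>?c ` G. \<Sum>g\<in>{g \<in> G. ?c g = q}. 1)"
    by (rule sum.image_gen[OF finite_G])
  also have "\<dots> = (\<Sum>q\<in>conj_orbit p. card (centralizer p))"
    unfolding orbit by (rule sum.cong) (auto simp: card_conj_fibre)
  finally show ?thesis by simp
qed

lemma card_centralizer_conj_orbit:
  assumes "q \<in> conj_orbit p"
  shows "card (centralizer q) = card (centralizer p)"
proof -
  have "card (conj_orbit p) > 0"
    using finite_conj_orbit conj_orbit_self by (metis card_gt_0_iff empty_iff)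
  moreover have "card (conj_orbit p) * card (centralizer q) = card (conj_orbit p) * card (centralizer p)"
    using orbit_stabilizer[of p] orbit_stabilizer[of q] conj_orbit_eq[OF assms] by metis
  ultimately show ?thesis by simp
qed

lemma sum_centralizer_conj_orbit: "(\<Sum>q\<in>conj_orbit p. card (centralizer q)) = card G"
  by (simp add: card_centralizer_conj_orbit orbit_stabilizer[symmetric])

theorem burnside:
  "card G * card (conj_orbit ` {p. p permutes A})
     = (\<Sum>g\<in>G. card {p. p permutes A \<and> g \<circ> p \<circ> inv g = p})"
proof -
  let ?P = "{p. p permutes A}"
  have fin: "finite ?P" using finite_permutations[OF finite_domain] .
  have "(\<Sum>g\<in>G. card {p. p permutes A \<and> g \<circ> p \<circ> inv g = p})
      = (\<Sum>g\<in>G. \<Sum>p\<in>?P. if g \<circ> p \<circ> inv g = p then 1 else 0)"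
    using fin by (simp add: sum.If_cases Int_def)
  also have "\<dots> = (\<Sum>p\<in>?P. card (centralizer p))"
    unfolding centralizer_def using finite_G by (subst sum.swap) (simp add: sum.If_cases Int_def)
  also have "\<dots> = (\<Sum>X\<in>conj_orbit ` ?P. \<Sum>q\<in>{p \<in> ?P. conj_orbit p = X}. card (centralizer q))"
    using fin by (rule sum.image_gen)
  also have "\<dots> = (\<Sum>X\<in>conj_orbit ` ?P. card G)"
  proof (rule sum.cong)
    fix X assume "X \<in> conj_orbit ` ?P"
    then obtain p where "p permutes A" "X = conj_orbit p" by blast
    then have "{q \<in> ?P. conj_orbit q = X} = conj_orbit p"
      using conj_orbit_eq_iff conj_orbit_subset by blast
    then show "(\<Sum>q\<in>{q \<in> ?P. conj_orbit q = X}. card (centralizer q)) = card G"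
      by (simp add: sum_centralizer_conj_orbit)
  qed simp
  finally show ?thesis by simp
qed

end

section \<open>The pairing Sigma0 and its centralizer H\<close>

lemma conj_eq_iff_commute: "bij g \<Longrightarrow> g \<circ> s \<circ> inv g = s \<longleftrightarrow> g \<circ> s = s \<circ> g"
  by (metis bij_is_inj bij_is_surj comp_id inv_o_cancel o_assoc surj_iff)

lemma Sigma0_Sigma0 [simp]: "Sigma0 n (Sigma0 n k) = k"
  unfolding Sigma0_def by (cases "k < 2*n"; cases "even k") (auto elim!: evenE oddE)

lemma Sigma0_involution: "Sigma0 n \<circ> Sigma0 n = id"
  by auto

lemma Sigma0_lt: "k < 2*n \<Longrightarrow> Sigma0 n k < 2*n"
  unfolding Sigma0_def by (cases "even k") (auto elim!: evenE oddE)

lemma Sigma0_div2 [simp]: "Sigma0 n k div 2 = k div 2"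
  unfolding Sigma0_def by (cases "k < 2*n"; cases "even k") (auto elim!: evenE oddE)

lemma Sigma0_neq: "k < 2*n \<Longrightarrow> Sigma0 n k \<noteq> k"
  unfolding Sigma0_def by (cases "even k") (auto elim!: evenE oddE)

lemma eq_Sigma0_if_same_pair:
  assumes "x < 2*n" "y < 2*n" "x div 2 = y div 2" "x \<noteq> y"
  shows "y = Sigma0 n x"
  using assms unfolding Sigma0_def by (cases "even x"; cases "even y") (auto elim!: evenE oddE)

lemma Hgrp_iff_commute:
  "\<gamma> \<in> Hgrp n \<longleftrightarrow> \<gamma> permutes {0..<2*n} \<and> \<gamma> \<circ> Sigma0 n = Sigma0 n \<circ> \<gamma>"
proof (cases "\<gamma> permutes {0..<2*n}")
  case True
  then show ?thesis
    using conj_eq_iff_commute[OF permutes_bij[OF True], of "Sigma0 n"] by (simp add: Hgrp_def Sym_def)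
qed (simp add: Hgrp_def Sym_def)

lemma Hgrp_iff_preserves_pairs:
  "\<gamma> \<in> Hgrp n \<longleftrightarrow> \<gamma> permutes {0..<2*n} \<and>
     (\<forall>k<2*n. \<forall>k'<2*n. k div 2 = k' div 2 \<longrightarrow> \<gamma> k div 2 = \<gamma> k' div 2)"
proof (cases "\<gamma> permutes {0..<2*n}")
  case perm: True
  have lt: "k < 2*n \<Longrightarrow> \<gamma> k < 2*n" for k
    using permutes_in_image[OF perm] by simp
  show ?thesis
  proof
    assume "\<gamma> \<in> Hgrp n"
    then have comm: "\<gamma> (Sigma0 n k) = Sigma0 n (\<gamma> k)" for k
      unfolding Hgrp_iff_commute by (metis comp_apply)
    show "\<gamma> permutes {0..<2*n} \<and>
      (\<forall>k<2*n. \<forall>k'<2*n. k div 2 = k' div 2 \<longrightarrow> \<gamma> k div 2 = \<gamma> k' div 2)"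
      using perm eq_Sigma0_if_same_pair comm Sigma0_div2 by metis
  next
    assume "\<gamma> permutes {0..<2*n} \<and>
      (\<forall>k<2*n. \<forall>k'<2*n. k div 2 = k' div 2 \<longrightarrow> \<gamma> k div 2 = \<gamma> k' div 2)"
    then have pairs: "k < 2*n \<Longrightarrow> k' < 2*n \<Longrightarrow> k div 2 = k' div 2 \<Longrightarrow> \<gamma> k div 2 = \<gamma> k' div 2"
      for k k' by blast
    have "\<gamma> (Sigma0 n k) = Sigma0 n (\<gamma> k)" for k
    proof (cases "k < 2*n")
      case True
      have "\<gamma> (Sigma0 n k) \<noteq> \<gamma> k"
        using Sigma0_neq[OF True] permutes_inj[OF perm] by (metis injD)
      then show ?thesis
        using eq_Sigma0_if_same_pair lt True Sigma0_lt pairs[OF True Sigma0_lt[OF True]] by simp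
    next
      case False
      then show ?thesis using permutes_not_in[OF perm] by (simp add: Sigma0_def)
    qed
    then show "\<gamma> \<in> Hgrp n" using perm by (auto simp: Hgrp_iff_commute)
  qed
qed (simp add: Hgrp_def Sym_def)

interpretation Hgrp: permutation_group "{0..<2*n}" "Hgrp n" for n
proof
  fix g h assume g: "g \<in> Hgrp n" and h: "h \<in> Hgrp n"
  then show "g permutes {0..<2*n}" by (simp add: Hgrp_iff_commute)
  show "g \<circ> h \<in> Hgrp n"
    using g h by (auto simp: Hgrp_iff_commute permutes_compose o_assoc) (metis o_assoc)
  have perm: "g permutes {0..<2*n}" and comm: "g \<circ> Sigma0 n = Sigma0 n \<circ> g"
    using g by (simp_all add: Hgrp_iff_commute)
  have inverse: "inv g \<circ> g = id" "g \<circ> inv g = id" using permutes_inv_o[OF perm] by auto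
  have "inv g \<circ> Sigma0 n = inv g \<circ> Sigma0 n \<circ> (g \<circ> inv g)" by (simp add: inverse)
  also have "\<dots> = inv g \<circ> (g \<circ> Sigma0 n) \<circ> inv g" by (simp add: comm o_assoc)
  also have "\<dots> = (inv g \<circ> g) \<circ> Sigma0 n \<circ> inv g" by (simp only: o_assoc)
  also have "\<dots> = Sigma0 n \<circ> inv g" by (simp add: inverse)
  finally show "inv g \<in> Hgrp n" by (simp add: Hgrp_iff_commute permutes_inv[OF perm])
qed (auto simp: Hgrp_iff_commute permutes_id)

section \<open>Evaluating the delta sums\<close>

lemma comp_inv_eq_id_iff: "bij a \<Longrightarrow> f \<circ> inv a = id \<longleftrightarrow> f = a"
proof
  assume a: "bij a" and "f \<circ> inv a = id"
  have "f = (f \<circ> inv a) \<circ> a" by (simp only: o_assoc[symmetric] inv_o_cancel[OF bij_is_inj[OF a]] comp_id)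
  with \<open>f \<circ> inv a = id\<close> show "f = a" by simp
qed (simp add: bij_is_surj surj_iff[symmetric])

lemma comp_eq_id_iff_involution: "s \<circ> s = id \<Longrightarrow> s \<circ> f = id \<longleftrightarrow> f = s"
proof
  assume s: "s \<circ> s = id" and "s \<circ> f = id"
  have "f = s \<circ> (s \<circ> f)" by (simp only: o_assoc s id_comp)
  with \<open>s \<circ> f = id\<close> show "f = s" by simp
qed simp

lemma sum_delta_commutator:
  "(\<Sum>\<alpha>\<in>Sym m. delta (\<gamma> \<circ> \<alpha> \<circ> inv \<gamma> \<circ> inv \<alpha>))
     = real (card {\<alpha>. \<alpha> permutes {0..<m} \<and> \<gamma> \<circ> \<alpha> \<circ> inv \<gamma> = \<alpha>})"
proof -
  have "(\<Sum>\<alpha>\<in>Sym m. delta (\<gamma> \<circ> \<alpha> \<circ> inv \<gamma> \<circ> inv \<alpha>))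
      = (\<Sum>\<alpha>\<in>Sym m. if \<gamma> \<circ> \<alpha> \<circ> inv \<gamma> = \<alpha> then 1 else 0)"
    by (rule sum.cong) (simp_all add: Sym_def delta_def comp_inv_eq_id_iff permutes_bij)
  also have "\<dots> = real (card {\<alpha>. \<alpha> permutes {0..<m} \<and> \<gamma> \<circ> \<alpha> \<circ> inv \<gamma> = \<alpha>})"
    by (simp add: Sym_def finite_permutations sum.If_cases Int_def)
  finally show ?thesis .
qed

lemma card_Hgrp_pos: "card (Hgrp n) > 0"
  using Hgrp.finite_G Hgrp.id_mem card_gt_0_iff by blast

lemma burnside_Hgrp:
  "(1 / real (card (Hgrp n))) * (\<Sum>\<gamma>\<in>Hgrp n. \<Sum>\<alpha>\<in>Sym (2*n). delta (\<gamma> \<circ> \<alpha> \<circ> inv \<gamma> \<circ> inv \<alpha>))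
     = real (card (Hgrp.conj_orbit n ` Sym (2*n)))"
proof -
  have "(\<Sum>\<gamma>\<in>Hgrp n. \<Sum>\<alpha>\<in>Sym (2*n). delta (\<gamma> \<circ> \<alpha> \<circ> inv \<gamma> \<circ> inv \<alpha>))
      = real (card (Hgrp n) * card (Hgrp.conj_orbit n ` Sym (2*n)))"
    unfolding sum_delta_commutator by (simp add: Sym_def flip: of_nat_sum Hgrp.burnside)
  then show ?thesis using card_Hgrp_pos[of n] by simp
qed

lemma delta_Sigma0_conj:
  "delta (Sigma0 n \<circ> \<gamma> \<circ> Sigma0 n \<circ> inv \<gamma>) = (if \<gamma> \<circ> Sigma0 n \<circ> inv \<gamma> = Sigma0 n then 1 else 0)"
proof -
  have "Sigma0 n \<circ> \<gamma> \<circ> Sigma0 n \<circ> inv \<gamma> = Sigma0 n \<circ> (\<gamma> \<circ> Sigma0 n \<circ> inv \<gamma>)"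
    by (simp add: o_assoc)
  then show ?thesis by (simp add: delta_def comp_eq_id_iff_involution[OF Sigma0_involution])
qed

lemma sum_over_Hgrp_via_delta:
  "(\<Sum>\<sigma>\<in>Sym (2*n). \<Sum>\<gamma>\<in>Sym (2*n).
       delta (\<gamma> \<circ> \<sigma> \<circ> inv \<gamma> \<circ> inv \<sigma>) * delta (Sigma0 n \<circ> \<gamma> \<circ> Sigma0 n \<circ> inv \<gamma>))
   = (\<Sum>\<gamma>\<in>Hgrp n. \<Sum>\<sigma>\<in>Sym (2*n). delta (\<gamma> \<circ> \<sigma> \<circ> inv \<gamma> \<circ> inv \<sigma>))"
proof -
  have "(\<Sum>\<gamma>\<in>Sym (2*n). delta (\<gamma> \<circ> \<sigma> \<circ> inv \<gamma> \<circ> inv \<sigma>) * delta (Sigma0 n \<circ> \<gamma> \<circ> Sigma0 n \<circ> inv \<gamma>))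
      = (\<Sum>\<gamma>\<in>Hgrp n. delta (\<gamma> \<circ> \<sigma> \<circ> inv \<gamma> \<circ> inv \<sigma>))" for \<sigma>
  proof -
    have "(\<Sum>\<gamma>\<in>Sym (2*n). delta (\<gamma> \<circ> \<sigma> \<circ> inv \<gamma> \<circ> inv \<sigma>) * delta (Sigma0 n \<circ> \<gamma> \<circ> Sigma0 n \<circ> inv \<gamma>))
        = (\<Sum>\<gamma>\<in>Sym (2*n). if \<gamma> \<circ> Sigma0 n \<circ> inv \<gamma> = Sigma0 n then delta (\<gamma> \<circ> \<sigma> \<circ> inv \<gamma> \<circ> inv \<sigma>) else 0)"
      by (rule sum.cong) (simp_all add: delta_Sigma0_conj)
    also have "\<dots> = (\<Sum>\<gamma>\<in>Hgrp n. delta (\<gamma> \<circ> \<sigma> \<circ> inv \<gamma> \<circ> inv \<sigma>))"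
      unfolding Hgrp_def by (rule sum.inter_filter[symmetric]) (simp add: Sym_def finite_permutations)
    finally show ?thesis .
  qed
  then show ?thesis by (simp add: sum.swap[of _ "Hgrp n"])
qed

section \<open>A monomial criterion for linear independence\<close>

lemma lookup_cscale [simp]: "Poly_Mapping.lookup (cscale c p) m = c * Poly_Mapping.lookup p m"
  by (simp add: cscale_def map.rep_eq when_def)

interpretation complex_poly: vector_space cscale
  by unfold_locales (simp_all add: poly_mapping_eq_iff fun_eq_iff lookup_add algebra_simps)

lemma independent_if_private_monomials:
  assumes witness: "\<And>p. p \<in> S \<Longrightarrow> \<exists>m. Poly_Mapping.lookup p m \<noteq> 0 \<and> (\<forall>q\<in>S. q \<noteq> p \<longrightarrow> Poly_Mapping.lookup q m = 0)"
  shows "\<not> complex_poly.dependent S"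
proof
  assume "complex_poly.dependent S"
  then obtain T u p where T: "finite T" "T \<subseteq> S" and sum: "(\<Sum>q\<in>T. cscale (u q) q) = 0"
    and p: "p \<in> T" "u p \<noteq> 0"
    unfolding complex_poly.dependent_explicit by blast
  obtain m where m: "Poly_Mapping.lookup p m \<noteq> 0" and others: "\<forall>q\<in>S. q \<noteq> p \<longrightarrow> Poly_Mapping.lookup q m = 0"
    using witness p(1) T(2) by blast
  have "0 = Poly_Mapping.lookup (\<Sum>q\<in>T. cscale (u q) q) m" by (simp add: sum)
  also have "\<dots> = (\<Sum>q\<in>T. u q * Poly_Mapping.lookup q m)" by (simp add: lookup_sum)
  also have "\<dots> = u p * Poly_Mapping.lookup p m"
    using others T p(1) by (subst sum.remove[OF T(1) p(1)]) (auto intro!: sum.neutral)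
  finally show False using m p(2) by simp
qed

section \<open>Mesonic polynomials and H-orbits\<close>

definition flavour_maps :: "nat \<Rightarrow> nat \<Rightarrow> (nat \<Rightarrow> nat) set" where
  "flavour_maps n Nf = PiE {0..<n} (\<lambda>_. {0..<Nf})"

definition colour_maps :: "nat \<Rightarrow> nat \<Rightarrow> (nat \<Rightarrow> nat) set" where
  "colour_maps n Nc = PiE {0..<2*n} (\<lambda>_. {0..<Nc})"

definition meson_monomial :: "nat \<Rightarrow> (nat \<Rightarrow> nat) \<Rightarrow> (nat \<Rightarrow> nat) \<Rightarrow> (nat \<Rightarrow> nat) \<Rightarrow> (var \<Rightarrow>\<^sub>0 nat)" where
  "meson_monomial n \<alpha> a i = (\<Sum>k<2*n. Poly_Mapping.single (a (k div 2), i k, i (\<alpha> k)) 1)"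

lemma prod_Xvar:
  "finite K \<Longrightarrow> (\<Prod>k\<in>K. Xvar (v k)) = Poly_Mapping.single (\<Sum>k\<in>K. Poly_Mapping.single (v k) 1) 1"
  by (induction K rule: finite_induct) (auto simp: Xvar_def mult_single)

lemma mesonic_eq_sum_monomials:
  "mesonic n Nf Nc \<alpha> =
     (\<Sum>a\<in>flavour_maps n Nf. \<Sum>i\<in>colour_maps n Nc. Poly_Mapping.single (meson_monomial n \<alpha> a i) 1)"
  by (simp add: mesonic_def flavour_maps_def colour_maps_def meson_monomial_def prod_Xvar)

lemma lookup_mesonic_nonzero_iff:
  "Poly_Mapping.lookup (mesonic n Nf Nc \<alpha>) m \<noteq> 0 \<longleftrightarrow>
     (\<exists>a\<in>flavour_maps n Nf. \<exists>i\<in>colour_maps n Nc. meson_monomial n \<alpha> a i = m)"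
proof -
  have "Poly_Mapping.lookup (mesonic n Nf Nc \<alpha>) m =
      of_nat (\<Sum>a\<in>flavour_maps n Nf. \<Sum>i\<in>colour_maps n Nc. if meson_monomial n \<alpha> a i = m then 1 else 0)"
    by (simp add: mesonic_eq_sum_monomials lookup_sum lookup_single when_def of_nat_sum)
      (auto intro!: sum.cong)
  moreover have "finite (flavour_maps n Nf)" "finite (colour_maps n Nc)"
    by (simp_all add: flavour_maps_def colour_maps_def finite_PiE)
  ultimately show ?thesis by (simp only: of_nat_eq_0_iff) (simp add: sum_eq_0_iff)
qed

lemma keys_meson_monomial:
  "Poly_Mapping.keys (meson_monomial n \<alpha> a i) = (\<lambda>k. (a (k div 2), i k, i (\<alpha> k))) ` {..<2*n}"
proof -
  have "Poly_Mapping.lookup (meson_monomial n \<alpha> a i) v =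
      (\<Sum>k<2*n. if (a (k div 2), i k, i (\<alpha> k)) = v then 1 else 0)" for v
    by (simp add: meson_monomial_def lookup_sum lookup_single when_def) (auto intro!: sum.cong)
  then show ?thesis
    unfolding set_eq_iff in_keys_iff
    by (auto simp: sum_eq_0_iff image_iff)
qed

lemma permutes_lt: "(\<alpha> :: nat \<Rightarrow> nat) permutes {0..<m} \<Longrightarrow> k < m \<Longrightarrow> \<alpha> k < m"
  using permutes_in_image[of \<alpha> "{0..<m}" k] by simp

lemma diagonal_monomial_in_mesonic:
  assumes "n \<le> Nf" "2*n \<le> Nc" "\<alpha> \<in> Sym (2*n)"
  shows "Poly_Mapping.lookup (mesonic n Nf Nc \<alpha>) (meson_monomial n \<alpha> id id) \<noteq> 0"
proof -
  let ?a = "restrict id {0..<n}" and ?i = "restrict id {0..<2*n}"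
  have "?a \<in> flavour_maps n Nf" "?i \<in> colour_maps n Nc"
    using assms by (auto simp: flavour_maps_def colour_maps_def)
  moreover have "meson_monomial n \<alpha> ?a ?i = meson_monomial n \<alpha> id id"
    unfolding meson_monomial_def
    using assms(3) by (intro sum.cong) (auto simp: Sym_def permutes_lt)
  ultimately show ?thesis unfolding lookup_mesonic_nonzero_iff by blast
qed

lemma meson_monomial_eq_diagonal_D:
  assumes eq: "meson_monomial n \<beta> a i = meson_monomial n \<alpha> id id"
  shows "i ` {0..<2*n} = {0..<2*n}"
    and "k < 2*n \<Longrightarrow> i k div 2 = a (k div 2)"
    and "k < 2*n \<Longrightarrow> i (\<beta> k) = \<alpha> (i k)"
proof -
  have vars: "(\<lambda>k. (a (k div 2), i k, i (\<beta> k))) ` {..<2*n} = (\<lambda>k. (k div 2, k, \<alpha> k)) ` {..<2*n}"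
    using arg_cong[OF eq, of Poly_Mapping.keys] by (simp add: keys_meson_monomial)
  show "i ` {0..<2*n} = {0..<2*n}"
    using arg_cong[OF vars, of "(`) (fst \<circ> snd)"] by (simp add: image_image atLeast0LessThan)
  assume "k < 2*n"
  then have "(a (k div 2), i k, i (\<beta> k)) \<in> (\<lambda>k. (k div 2, k, \<alpha> k)) ` {..<2*n}"
    using vars by blast
  then show "i k div 2 = a (k div 2)" and "i (\<beta> k) = \<alpha> (i k)" by auto
qed

lemma conj_orbit_if_meson_monomial_eq_diagonal:
  assumes \<alpha>: "\<alpha> \<in> Sym (2*n)" and \<beta>: "\<beta> \<in> Sym (2*n)"
    and eq: "meson_monomial n \<beta> a i = meson_monomial n \<alpha> id id"
  shows "\<beta> \<in> Hgrp.conj_orbit n \<alpha>"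
proof -
  \<comment> \<open>the colour assignment itself conjugates \<open>\<beta>\<close> to \<open>\<alpha>\<close>\<close>
  define \<gamma> where "\<gamma> k = (if k < 2*n then i k else k)" for k
  have onto: "\<gamma> ` {0..<2*n} = {0..<2*n}"
    using meson_monomial_eq_diagonal_D(1)[OF eq] by (simp add: \<gamma>_def)
  then have "bij_betw \<gamma> {0..<2*n} {0..<2*n}"
    by (simp add: bij_betw_def eq_card_imp_inj_on)
  then have perm: "\<gamma> permutes {0..<2*n}"
    by (rule bij_imp_permutes) (simp add: \<gamma>_def)
  have \<gamma>H: "\<gamma> \<in> Hgrp n"
    unfolding Hgrp_iff_preserves_pairs using perm meson_monomial_eq_diagonal_D(2)[OF eq]
    by (simp add: \<gamma>_def)
  have "\<gamma> \<circ> \<beta> = \<alpha> \<circ> \<gamma>"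
  proof
    fix k
    show "(\<gamma> \<circ> \<beta>) k = (\<alpha> \<circ> \<gamma>) k"
    proof (cases "k < 2*n")
      case True
      then show ?thesis
        using \<beta> meson_monomial_eq_diagonal_D(3)[OF eq] by (simp add: \<gamma>_def Sym_def permutes_lt)
    next
      case False
      then show ?thesis using \<alpha> \<beta> by (simp add: \<gamma>_def Sym_def permutes_not_in)
    qed
  qed
  then have "\<gamma> \<circ> \<beta> \<circ> inv \<gamma> = \<alpha>"
    by (simp add: o_assoc[symmetric] Hgrp.inv_comp_cancel[OF \<gamma>H])
  then have "\<beta> = inv \<gamma> \<circ> \<alpha> \<circ> inv (inv \<gamma>)"
    using Hgrp.conj_inv[OF \<gamma>H, of \<beta>] by simp
  then show ?thesis
    unfolding Hgrp.conj_orbit_def using Hgrp.inv_mem[OF \<gamma>H] by blast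
qed

lemma conj_orbit_if_diagonal_monomial_in_mesonic:
  assumes "\<alpha> \<in> Sym (2*n)" "\<beta> \<in> Sym (2*n)"
    and "Poly_Mapping.lookup (mesonic n Nf Nc \<beta>) (meson_monomial n \<alpha> id id) \<noteq> 0"
  shows "\<beta> \<in> Hgrp.conj_orbit n \<alpha>"
  using assms conj_orbit_if_meson_monomial_eq_diagonal unfolding lookup_mesonic_nonzero_iff by blast

lemma bij_betw_PiE_precompose:
  assumes p: "p permutes A"
  shows "bij_betw (\<lambda>f. restrict (f \<circ> p) A) (PiE A (\<lambda>_. B)) (PiE A (\<lambda>_. B))"
proof (rule bij_betw_byWitness[where f' = "\<lambda>f. restrict (f \<circ> inv p) A"])
  have in_A: "x \<in> A \<Longrightarrow> p x \<in> A" "x \<in> A \<Longrightarrow> inv p x \<in> A" for x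
    using p permutes_in_image permutes_inv by (metis, metis)
  have inverses: "p (inv p x) = x" "inv p (p x) = x" for x
    using p permutes_inverses by metis+
  show "\<forall>f\<in>PiE A (\<lambda>_. B). restrict (restrict (f \<circ> p) A \<circ> inv p) A = f"
    "\<forall>f\<in>PiE A (\<lambda>_. B). restrict (restrict (f \<circ> inv p) A \<circ> p) A = f"
    by (auto simp: fun_eq_iff in_A inverses PiE_def extensional_def)
  show "(\<lambda>f. restrict (f \<circ> p) A) ` PiE A (\<lambda>_. B) \<subseteq> PiE A (\<lambda>_. B)"
    "(\<lambda>f. restrict (f \<circ> inv p) A) ` PiE A (\<lambda>_. B) \<subseteq> PiE A (\<lambda>_. B)"
    using in_A by auto
qed

definition pair_perm :: "nat \<Rightarrow> (nat \<Rightarrow> nat) \<Rightarrow> nat \<Rightarrow> nat" where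
  "pair_perm n \<gamma> m = (if m < n then \<gamma> (2*m) div 2 else m)"

lemma pair_perm_div2:
  assumes "\<gamma> \<in> Hgrp n" "k < 2*n"
  shows "pair_perm n \<gamma> (k div 2) = \<gamma> k div 2"
proof -
  have "2 * (k div 2) < 2*n" "2 * (k div 2) div 2 = k div 2" using assms(2) by auto
  then have "\<gamma> (2 * (k div 2)) div 2 = \<gamma> k div 2"
    using assms unfolding Hgrp_iff_preserves_pairs by blast
  then show ?thesis using assms(2) by (simp add: pair_perm_def)
qed

lemma pair_perm_permutes:
  assumes \<gamma>: "\<gamma> \<in> Hgrp n"
  shows "pair_perm n \<gamma> permutes {0..<n}"
proof -
  have lt: "k < 2*n \<Longrightarrow> \<gamma> k < 2*n" for k
    using \<gamma> by (simp add: Hgrp_def Sym_def permutes_lt)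
  have into: "pair_perm n \<gamma> ` {0..<n} \<subseteq> {0..<n}"
    using lt by (auto simp: pair_perm_def less_mult_imp_div_less mult.commute[of _ 2])
  have "pair_perm n (inv \<gamma>) (pair_perm n \<gamma> m) = m" if "m < n" for m
  proof -
    have "pair_perm n (inv \<gamma>) (pair_perm n \<gamma> m) = inv \<gamma> (\<gamma> (2*m)) div 2"
      using pair_perm_div2[OF Hgrp.inv_mem[OF \<gamma>] lt] that by (simp add: pair_perm_def)
    then show ?thesis
      using permutes_inverses(2)[OF Hgrp.permutes_mem[OF \<gamma>]] by simp
  qed
  then have "inj_on (pair_perm n \<gamma>) {0..<n}" by (metis atLeastLessThan_iff inj_on_inverseI)
  then have "bij_betw (pair_perm n \<gamma>) {0..<n} {0..<n}"
    using into by (simp add: bij_betw_def endo_inj_surj)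
  then show ?thesis by (rule bij_imp_permutes) (simp add: pair_perm_def)
qed

lemma meson_monomial_conj:
  assumes \<gamma>: "\<gamma> \<in> Hgrp n" and \<alpha>: "\<alpha> \<in> Sym (2*n)"
  shows "meson_monomial n (\<gamma> \<circ> \<alpha> \<circ> inv \<gamma>) a i =
    meson_monomial n \<alpha> (restrict (a \<circ> pair_perm n \<gamma>) {0..<n}) (restrict (i \<circ> \<gamma>) {0..<2*n})"
proof -
  have perm: "\<gamma> permutes {0..<2*n}" using \<gamma> by (rule Hgrp.permutes_mem)
  have "meson_monomial n (\<gamma> \<circ> \<alpha> \<circ> inv \<gamma>) a i
      = (\<Sum>k<2*n. Poly_Mapping.single (a (\<gamma> k div 2), i (\<gamma> k), i ((\<gamma> \<circ> \<alpha> \<circ> inv \<gamma>) (\<gamma> k))) 1)"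
    unfolding meson_monomial_def using permutes_imp_bij[OF perm]
    by (intro sum.reindex_bij_betw[symmetric]) (simp add: atLeast0LessThan)
  also have "\<dots> = meson_monomial n \<alpha> (restrict (a \<circ> pair_perm n \<gamma>) {0..<n}) (restrict (i \<circ> \<gamma>) {0..<2*n})"
    unfolding meson_monomial_def using \<alpha>
    by (intro sum.cong) (auto simp: Sym_def permutes_lt pair_perm_div2[OF \<gamma>] permutes_inverses(2)[OF perm])
  finally show ?thesis .
qed

lemma mesonic_conj_invariant:
  assumes \<gamma>: "\<gamma> \<in> Hgrp n" and \<alpha>: "\<alpha> \<in> Sym (2*n)"
  shows "mesonic n Nf Nc (\<gamma> \<circ> \<alpha> \<circ> inv \<gamma>) = mesonic n Nf Nc \<alpha>"
proof -
  have flavours: "bij_betw (\<lambda>a. restrict (a \<circ> pair_perm n \<gamma>) {0..<n}) (flavour_maps n Nf) (flavour_maps n Nf)"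
    unfolding flavour_maps_def by (rule bij_betw_PiE_precompose[OF pair_perm_permutes[OF \<gamma>]])
  have colours: "bij_betw (\<lambda>i. restrict (i \<circ> \<gamma>) {0..<2*n}) (colour_maps n Nc) (colour_maps n Nc)"
    unfolding colour_maps_def by (rule bij_betw_PiE_precompose[OF Hgrp.permutes_mem[OF \<gamma>]])
  have "mesonic n Nf Nc (\<gamma> \<circ> \<alpha> \<circ> inv \<gamma>) = (\<Sum>a\<in>flavour_maps n Nf. \<Sum>i\<in>colour_maps n Nc.
      Poly_Mapping.single (meson_monomial n \<alpha> (restrict (a \<circ> pair_perm n \<gamma>) {0..<n}) (restrict (i \<circ> \<gamma>) {0..<2*n})) 1)"
    unfolding mesonic_eq_sum_monomials meson_monomial_conj[OF \<gamma> \<alpha>] ..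
  also have "\<dots> = (\<Sum>a\<in>flavour_maps n Nf. \<Sum>i\<in>colour_maps n Nc.
      Poly_Mapping.single (meson_monomial n \<alpha> (restrict (a \<circ> pair_perm n \<gamma>) {0..<n}) i) 1)"
    by (intro sum.cong refl sum.reindex_bij_betw[OF colours])
  also have "\<dots> = mesonic n Nf Nc \<alpha>"
    unfolding mesonic_eq_sum_monomials
    by (rule sum.reindex_bij_betw[OF flavours, where g = "\<lambda>a. \<Sum>i\<in>colour_maps n Nc. Poly_Mapping.single (meson_monomial n \<alpha> a i) 1"])
  finally show ?thesis .
qed

lemma mesonic_eq_iff_conj_orbit_eq:
  assumes "n \<le> Nf" "2*n \<le> Nc" and \<alpha>: "\<alpha> \<in> Sym (2*n)" and \<beta>: "\<beta> \<in> Sym (2*n)"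
  shows "mesonic n Nf Nc \<alpha> = mesonic n Nf Nc \<beta> \<longleftrightarrow> Hgrp.conj_orbit n \<alpha> = Hgrp.conj_orbit n \<beta>"
proof
  assume "mesonic n Nf Nc \<alpha> = mesonic n Nf Nc \<beta>"
  then have "Poly_Mapping.lookup (mesonic n Nf Nc \<beta>) (meson_monomial n \<alpha> id id) \<noteq> 0"
    using diagonal_monomial_in_mesonic[OF assms(1-3)] by simp
  then have "\<beta> \<in> Hgrp.conj_orbit n \<alpha>"
    by (rule conj_orbit_if_diagonal_monomial_in_mesonic[OF \<alpha> \<beta>])
  then show "Hgrp.conj_orbit n \<alpha> = Hgrp.conj_orbit n \<beta>" by (simp add: Hgrp.conj_orbit_eq)
next
  assume "Hgrp.conj_orbit n \<alpha> = Hgrp.conj_orbit n \<beta>"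
  then obtain \<gamma> where "\<gamma> \<in> Hgrp n" "\<beta> = \<gamma> \<circ> \<alpha> \<circ> inv \<gamma>"
    using Hgrp.conj_orbit_self[of \<beta>] unfolding Hgrp.conj_orbit_def by blast
  then show "mesonic n Nf Nc \<alpha> = mesonic n Nf Nc \<beta>" using mesonic_conj_invariant[OF _ \<alpha>] by simp
qed

lemma independent_mesonic:
  assumes "n \<le> Nf" "2*n \<le> Nc"
  shows "\<not> complex_poly.dependent (mesonic n Nf Nc ` Sym (2*n))"
proof (rule independent_if_private_monomials, safe)
  fix \<alpha> assume \<alpha>: "\<alpha> \<in> Sym (2*n)"
  have "Poly_Mapping.lookup (mesonic n Nf Nc \<beta>) (meson_monomial n \<alpha> id id) = 0"
    if \<beta>: "\<beta> \<in> Sym (2*n)" and ne: "mesonic n Nf Nc \<beta> \<noteq> mesonic n Nf Nc \<alpha>" for \<beta>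
    using conj_orbit_if_diagonal_monomial_in_mesonic[OF \<alpha> \<beta>] Hgrp.conj_orbit_eq ne
      mesonic_eq_iff_conj_orbit_eq[OF assms \<beta> \<alpha>] by blast
  then show "\<exists>m. Poly_Mapping.lookup (mesonic n Nf Nc \<alpha>) m \<noteq> 0 \<and>
      (\<forall>q\<in>mesonic n Nf Nc ` Sym (2*n). q \<noteq> mesonic n Nf Nc \<alpha> \<longrightarrow> Poly_Mapping.lookup q m = 0)"
    using diagonal_monomial_in_mesonic[OF assms \<alpha>] by blast
qed

lemma card_image_eq_if_same_fibres:
  assumes "finite A" and "\<And>x y. x \<in> A \<Longrightarrow> y \<in> A \<Longrightarrow> f x = f y \<longleftrightarrow> g x = g y"
  shows "card (f ` A) = card (g ` A)"
proof -
  let ?P = "(\<lambda>x. (f x, g x)) ` A"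
  have "inj_on fst ?P" "inj_on snd ?P" using assms(2) by (auto intro!: inj_onI)
  then have "card (fst ` ?P) = card (snd ` ?P)" by (simp add: card_image)
  moreover have "fst ` ?P = f ` A" "snd ` ?P = g ` A" by force+
  ultimately show ?thesis by simp
qed

lemma span_dim_mesonic:
  assumes "n \<le> Nf" "2*n \<le> Nc"
  shows "span_dim (mesonic n Nf Nc ` Sym (2*n)) = card (Hgrp.conj_orbit n ` Sym (2*n))"
proof -
  have "span_dim (mesonic n Nf Nc ` Sym (2*n)) = card (mesonic n Nf Nc ` Sym (2*n))"
    unfolding span_dim_def by (rule complex_poly.dim_eq_card_independent[OF independent_mesonic[OF assms]])
  also have "\<dots> = card (Hgrp.conj_orbit n ` Sym (2*n))"
    by (rule card_image_eq_if_same_fibres) (simp_all add: Sym_def finite_permutations mesonic_eq_iff_conj_orbit_eq[OF assms])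
  finally show ?thesis .
qed

theorem mainTheorem7:
  fixes n Nc Nf :: nat
  assumes "n \<ge> 1" and "Nc \<ge> 2*n" and "Nf \<ge> 2*n"
  shows "real (span_dim (mesonic n Nf Nc ` Sym (2*n)))
           = (1 / real (card (Hgrp n))) *
               (\<Sum>\<gamma>\<in>Hgrp n. \<Sum>\<alpha>\<in>Sym (2*n). delta (\<gamma> \<circ> \<alpha> \<circ> inv \<gamma> \<circ> inv \<alpha>))
       \<and> (1 / real (card (Hgrp n))) *
               (\<Sum>\<gamma>\<in>Hgrp n. \<Sum>\<alpha>\<in>Sym (2*n). delta (\<gamma> \<circ> \<alpha> \<circ> inv \<gamma> \<circ> inv \<alpha>))
           = (1 / real (card (Hgrp n))) *
               (\<Sum>\<sigma>\<in>Sym (2*n). \<Sum>\<gamma>\<in>Sym (2*n).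
                  delta (\<gamma> \<circ> \<sigma> \<circ> inv \<gamma> \<circ> inv \<sigma>) *
                  delta (Sigma0 n \<circ> \<gamma> \<circ> Sigma0 n \<circ> inv \<gamma>))
       \<and> span_dim (mesonic n Nf Nc ` Sym (2*n))
           = card ((\<lambda>\<alpha>. {\<gamma> \<circ> \<alpha> \<circ> inv \<gamma> | \<gamma>. \<gamma> \<in> Hgrp n}) ` Sym (2*n))"
proof -
  have orbits: "Hgrp.conj_orbit n = (\<lambda>\<alpha>. {\<gamma> \<circ> \<alpha> \<circ> inv \<gamma> | \<gamma>. \<gamma> \<in> Hgrp n})"
    by (simp add: fun_eq_iff Hgrp.conj_orbit_def)
  have dim: "span_dim (mesonic n Nf Nc ` Sym (2*n)) = card (Hgrp.conj_orbit n ` Sym (2*n))"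
    using assms by (intro span_dim_mesonic) auto
  show ?thesis
    unfolding orbits[symmetric]
    by (intro conjI) (simp_all only: dim burnside_Hgrp sum_over_Hgrp_via_delta)
qed

end
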